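(* $\mathcal{A}(D)/\mathcal{V}(D)$ is a Lie algebra if and only if every affine plane (of order $3$) in $\Pi(D)$ is a vanishing subset of $D$.
   Context: Let $G$ be a group generated by a conjugacy class $D$ of involutions such that for all $d,e\in D$ the order of $de$ is $1$, $2$ or $3$. The Fischer space $\Pi(D)$ has point set $D$ and lines the triples $\{d,e,d^e\}$ with $d,e\in D$ non-commuting; affine planes are subspaces generated by two intersecting lines that are isomorphic to the affine plane of order $3$. $\mathcal{A}(D)$ is the $\mathbb{F}_2$-vector space of finite subsets of $D$ under symmetric difference (basis $D$), with bilinear product determined by $d*e=d+e+f$ if $\{d,e,f\}$ is a line and $d*e=0$ otherwise. The bilinear form is determined by $\langle d,e\rangle=1$ if $d,e$ do not commute and $0$ otherwise; $\mathcal{V}(D)$ is its radical; a finite subset $X\subseteq D$ is vanishing if $X\in\mathcal{V}(D)$, i.e., every $d\in D$ fails to commute with an even number of elements of $X$. *)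

theory Defs
  imports "HOL-Algebra.Algebra" "HOL-Library.Numeral_Type"
begin

definition commutes :: "('a, 'b) monoid_scheme \<Rightarrow> 'a \<Rightarrow> 'a \<Rightarrow> bool" where
  "commutes G d e \<longleftrightarrow> d \<otimes>\<^bsub>G\<^esub> e = e \<otimes>\<^bsub>G\<^esub> d"

definition conjg :: "('a, 'b) monoid_scheme \<Rightarrow> 'a \<Rightarrow> 'a \<Rightarrow> 'a" where
  "conjg G d e = inv\<^bsub>G\<^esub> e \<otimes>\<^bsub>G\<^esub> d \<otimes>\<^bsub>G\<^esub> e"

definition fischer_line :: "('a, 'b) monoid_scheme \<Rightarrow> 'a set \<Rightarrow> 'a set \<Rightarrow> bool" where
  "fischer_line G D L \<longleftrightarrow>
     (\<exists>d\<in>D. \<exists>e\<in>D. \<not> commutes G d e \<and> L = {d, e, conjg G d e})"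

definition fischer_subspace :: "('a, 'b) monoid_scheme \<Rightarrow> 'a set \<Rightarrow> 'a set \<Rightarrow> bool" where
  "fischer_subspace G D S \<longleftrightarrow> S \<subseteq> D \<and>
     (\<forall>L. fischer_line G D L \<and> 2 \<le> card (L \<inter> S) \<longrightarrow> L \<subseteq> S)"

definition fischer_span :: "('a, 'b) monoid_scheme \<Rightarrow> 'a set \<Rightarrow> 'a set \<Rightarrow> 'a set" where
  "fischer_span G D P = {x. \<forall>S. fischer_subspace G D S \<and> P \<subseteq> S \<longrightarrow> x \<in> S}"

definition ag23_line :: "(3 \<times> 3) set \<Rightarrow> bool" where
  "ag23_line L \<longleftrightarrow> (\<exists>a b c d::3. (c, d) \<noteq> (0, 0) \<and> L = {(a + t * c, b + t * d) | t. True})"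

definition iso_AG23 :: "('a, 'b) monoid_scheme \<Rightarrow> 'a set \<Rightarrow> 'a set \<Rightarrow> bool" where
  "iso_AG23 G D S \<longleftrightarrow> (\<exists>f :: 'a \<Rightarrow> 3 \<times> 3. bij_betw f S UNIV \<and>
     (\<forall>L. L \<subseteq> S \<longrightarrow> (fischer_line G D L \<longleftrightarrow> ag23_line (f ` L))))"

definition fischer_affine_plane :: "('a, 'b) monoid_scheme \<Rightarrow> 'a set \<Rightarrow> 'a set \<Rightarrow> bool" where
  "fischer_affine_plane G D S \<longleftrightarrow>
     (\<exists>L1 L2. fischer_line G D L1 \<and> fischer_line G D L2 \<and> L1 \<noteq> L2 \<and> L1 \<inter> L2 \<noteq> {} \<and>
        S = fischer_span G D (L1 \<union> L2) \<and> iso_AG23 G D S)"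

(* Underlying set of A(D): finite subsets of D (addition = symmetric difference) *)
definition algA :: "'a set \<Rightarrow> 'a set set" where
  "algA D = {P. finite P \<and> P \<subseteq> D}"

definition symdiff :: "'a set \<Rightarrow> 'a set \<Rightarrow> 'a set" where
  "symdiff P Q = (P - Q) \<union> (Q - P)"

(* product of basis elements: d*e = d+e+f if {d,e,f} is a line, 0 otherwise *)
definition basis_mult :: "('a, 'b) monoid_scheme \<Rightarrow> 'a \<Rightarrow> 'a \<Rightarrow> 'a set" where
  "basis_mult G d e = (if commutes G d e then {} else {d, e, conjg G d e})"

(* bilinear extension over F_2: P*Q = sum_{d in P, e in Q} d*e *)
definition algA_mult :: "('a, 'b) monoid_scheme \<Rightarrow> 'a set \<Rightarrow> 'a set \<Rightarrow> 'a set" where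
  "algA_mult G P Q = {f. odd (card {(d, e). d \<in> P \<and> e \<in> Q \<and> f \<in> basis_mult G d e})}"

(* the radical V(D) of the form: vanishing subsets *)
definition vanishing :: "('a, 'b) monoid_scheme \<Rightarrow> 'a set \<Rightarrow> 'a set \<Rightarrow> bool" where
  "vanishing G D P \<longleftrightarrow> P \<in> algA D \<and>
     (\<forall>d\<in>D. even (card {e \<in> P. \<not> commutes G d e}))"

definition algV :: "('a, 'b) monoid_scheme \<Rightarrow> 'a set \<Rightarrow> 'a set set" where
  "algV G D = {P. vanishing G D P}"

(* A(D)/V(D) is a Lie algebra (over F_2): V(D) is an ideal, so the product descends
   to the quotient, and the induced product is alternating and satisfies Jacobi. *)
definition quotient_is_Lie :: "('a, 'b) monoid_scheme \<Rightarrow> 'a set \<Rightarrow> bool" where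
  "quotient_is_Lie G D \<longleftrightarrow>
     (\<forall>P\<in>algA D. \<forall>Q\<in>algV G D. algA_mult G P Q \<in> algV G D \<and> algA_mult G Q P \<in> algV G D) \<and>
     (\<forall>P\<in>algA D. algA_mult G P P \<in> algV G D) \<and>
     (\<forall>P\<in>algA D. \<forall>Q\<in>algA D. \<forall>R\<in>algA D.
        symdiff (symdiff (algA_mult G P (algA_mult G Q R)) (algA_mult G Q (algA_mult G R P)))
                (algA_mult G R (algA_mult G P Q)) \<in> algV G D)"

end

theory Submission
  imports Defs "HOL-Library.Z2" "HOL-Library.Indicator_Function" "HOL-Library.Product_Plus"
begin

text \<open>
  A finite subset of \<open>D\<close> is identified with its indicator function into \<open>\<bbbF>\<^sub>2\<close>. Since conjugation
  preserves commuting, the form is associative, \<open>\<langle>g, p q\<rangle> = \<langle>g p, q\<rangle>\<close>, so the radical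
  \<open>\<V>(D)\<close> is an ideal; the product is commutative with \<open>P P = 0\<close>, so the quotient is alternating.
  The Jacobiator is trilinear, hence it suffices to look at basis triples \<open>d, e, f\<close>. A case
  analysis of the commuting pairs among \<open>d, e, f\<close> and \<open>f\<^sup>e\<close> shows that the Jacobiator vanishes
  unless \<open>d, e, f\<close> span an affine plane; then they coordinatize it by \<open>\<bbbF>\<^sub>3\<^sup>2\<close>, sitting at
  \<open>(0,0), (1,0), (0,1)\<close>, and their Jacobiator is the sum of three parallel lines, i.e. the whole
  plane. Conversely every affine plane is the Jacobiator of three of its points.
\<close>

section \<open>Sums over \<open>\<bbbF>\<^sub>2\<close>\<close>

(* Keep bit arithmetic in ring form, so that sums cancel by ac_simps. *)
declare add_bit_eq_xor[simp del] mult_bit_eq_and[simp del]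

lemma bit_add_self [simp]: "x + x = (0::bit)"
  by (cases x) auto

lemma odd_card_iff_sum_bit:
  assumes "finite A"
  shows "odd (card {x\<in>A. P x}) \<longleftrightarrow> (\<Sum>x\<in>A. of_bool (P x) :: bit) = 1"
proof -
  have of_nat_bit: "(of_nat n :: bit) = of_bool (odd n)" for n
    by (induction n) auto
  have "(\<Sum>x\<in>A. of_bool (P x) :: bit) = of_nat (card {x\<in>A. P x})"
    using assms by (simp add: sum.If_cases Int_def)
  then show ?thesis by (simp add: of_nat_bit)
qed

lemma indicator_symdiff: "indicator (symdiff M N) x = (indicator M x + indicator N x :: bit)"
  by (auto simp: indicator_def symdiff_def)

lemma set_eq_iff_indicator_bit: "M = N \<longleftrightarrow> (\<forall>x. (indicator M x :: bit) = indicator N x)"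
  by (auto simp: indicator_def fun_eq_iff split: if_splits)

lemma sum_rotate3: "(\<Sum>q\<in>Q. \<Sum>r\<in>R. \<Sum>p\<in>P. f p q r) = (\<Sum>p\<in>P. \<Sum>q\<in>Q. \<Sum>r\<in>R. f p q r)"
proof -
  have "(\<Sum>q\<in>Q. \<Sum>r\<in>R. \<Sum>p\<in>P. f p q r) = (\<Sum>q\<in>Q. \<Sum>p\<in>P. \<Sum>r\<in>R. f p q r)"
    by (rule sum.cong[OF refl], rule sum.swap)
  also have "\<dots> = (\<Sum>p\<in>P. \<Sum>q\<in>Q. \<Sum>r\<in>R. f p q r)" by (rule sum.swap)
  finally show ?thesis .
qed

lemma sum_bit_symmetric_square:
  fixes f :: "'x \<Rightarrow> 'x \<Rightarrow> bit"
  assumes "finite P" "\<And>d e. d \<in> P \<Longrightarrow> e \<in> P \<Longrightarrow> f d e = f e d" "\<And>d. d \<in> P \<Longrightarrow> f d d = 0"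
  shows "(\<Sum>d\<in>P. \<Sum>e\<in>P. f d e) = 0"
  using assms
proof (induction P rule: finite_induct)
  case empty then show ?case by simp
next
  case (insert a F)
  have "(\<Sum>d\<in>F. f d a) = (\<Sum>e\<in>F. f a e)"
    by (rule sum.cong[OF refl]) (use insert in auto)
  moreover have "(\<Sum>d\<in>F. \<Sum>e\<in>F. f d e) = 0" using insert by auto
  ultimately show ?case using insert by (simp add: sum.distrib ac_simps)
qed

section \<open>The affine plane over \<open>\<bbbF>\<^sub>3\<close>\<close>

lemma three_cases: "(x::3) = 0 \<or> x = 1 \<or> x = 2"
proof (cases x rule: bit1_cases)
  case (of_int z)
  then have "z < 3" by simp
  then have "z = 0 \<or> z = 1 \<or> z = 2" using of_int by arith
  then show ?thesis using of_int by auto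
qed

lemma arith_3 [simp]: "- 1 = (2::3)" "- 2 = (1::3)" "3 = (0::3)" "2 + 2 = (1::3)" "1 - 2 = (2::3)"
  by simp_all

lemma all_3x3: "(\<forall>x::3\<times>3. P x) \<longleftrightarrow> P (0,0) \<and> P (0,1) \<and> P (0,2) \<and> P (1,0) \<and> P (1,1) \<and> P (1,2)
    \<and> P (2,0) \<and> P (2,1) \<and> P (2,2)"
proof -
  have "(\<forall>x::3. Q x) \<longleftrightarrow> Q 0 \<and> Q 1 \<and> Q 2" for Q using three_cases by metis
  then show ?thesis by (simp only: split_paired_All) blast
qed

lemma three_mult_3 [simp]: "3 * (y::3) = 0"
  by simp

lemma triple_3x3: "(q::3\<times>3) + q + q = 0"
  by (cases q) (simp add: zero_prod_def algebra_simps)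

lemma neg_double_3x3: "- x - x = (x::3\<times>3)"
proof -
  have "- x - x - x = - (x + x + x)" by (simp add: algebra_simps)
  then show ?thesis by (simp add: triple_3x3)
qed

lemma parallel_lines_cover:
  "indicator {(0,0), (2,2), (1,1)} p + indicator {(1,0), (0,2), (2,1)} p
     + indicator {(0,1), (2,0), (1,2)} (p::3\<times>3) = (1::bit)"
proof -
  obtain a b where "p = (a, b)" by (cases p)
  then show ?thesis using three_cases[of a] three_cases[of b] by (elim disjE) (simp_all add: indicator_def)
qed

lemma ag23_line_points:
  "{(a + t * c, b + t * d) | t::3. True} = {(a, b), (a + c, b + d), (a + 2 * c, b + 2 * d)}"
proof -
  have "(UNIV :: 3 set) = {0, 1, 2}" using three_cases by blast
  then have "{(a + t * c, b + t * d) | t::3. True} = (\<lambda>t. (a + t * c, b + t * d)) ` {0, 1, 2}"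
    by blast
  then show ?thesis by simp
qed

lemma ag23_line_iff: "ag23_line M \<longleftrightarrow> (\<exists>x y. x \<noteq> y \<and> M = {x, y, - x - y})"
proof
  assume "ag23_line M"
  then obtain a b c d :: 3 where cd: "(c, d) \<noteq> (0, 0)" and M: "M = {(a + t * c, b + t * d) | t. True}"
    unfolding ag23_line_def by blast
  have M': "M = {(a, b), (a + c, b + d), (a + 2 * c, b + 2 * d)}"
    using M ag23_line_points by simp
  have "- (a, b) - (a + c, b + d) = (a + 2 * c, b + 2 * d)"
    using three_mult_3[of a] three_mult_3[of b] by (simp add: algebra_simps)
  moreover have "(a, b) \<noteq> (a + c, b + d)" using cd by simp
  ultimately show "\<exists>x y. x \<noteq> y \<and> M = {x, y, - x - y}" using M' by metis
next
  assume "\<exists>x y. x \<noteq> y \<and> M = {x, y, - x - y}"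
  then obtain a b a' b' :: 3 where xy: "(a, b) \<noteq> (a', b')" and M: "M = {(a, b), (a', b'), - (a, b) - (a', b')}"
    by auto
  have third: "2 * u' - u = - u - u'" for u u' :: 3
  proof -
    have "2 * u' - u - (- u - u') = 3 * u'" by (simp add: algebra_simps)
    then show ?thesis by simp
  qed
  have "M = {(a + t * (a' - a), b + t * (b' - b)) | t. True}"
    unfolding ag23_line_points M by (simp add: third)
  moreover have "(a' - a, b' - b) \<noteq> (0, 0)" using xy by auto
  ultimately show "ag23_line M" unfolding ag23_line_def by blast
qed

section \<open>Classes of 3-transpositions and their Fischer space\<close>

locale three_transpositions = group G for G :: "('a, 'b) monoid_scheme" (structure) +
  fixes D :: "'a set"
  assumes class_carrier: "D \<subseteq> carrier G"
    and class_invol: "d \<in> D \<Longrightarrow> d \<otimes> d = \<one>"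
    and class_conj_closed: "a \<in> D \<Longrightarrow> b \<in> D \<Longrightarrow> a \<otimes> b \<otimes> a \<in> D"
    and class_braid: "a \<in> D \<Longrightarrow> b \<in> D \<Longrightarrow> a \<otimes> b \<noteq> b \<otimes> a \<Longrightarrow> a \<otimes> b \<otimes> a = b \<otimes> a \<otimes> b"
begin

text \<open>\<open>cnj a b\<close> is \<open>b\<^sup>a\<close> in the paper's notation, as \<open>a\<close> is an involution.\<close>

definition cnj :: "'a \<Rightarrow> 'a \<Rightarrow> 'a" where "cnj a b = a \<otimes> b \<otimes> a"

lemma class_in_carrier [simp]: "a \<in> D \<Longrightarrow> a \<in> carrier G"
  using class_carrier by auto

lemma class_invol_cancel [simp]: "a \<in> D \<Longrightarrow> x \<in> carrier G \<Longrightarrow> a \<otimes> (a \<otimes> x) = x"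
  by (simp add: m_assoc[symmetric] class_invol)

lemma class_inv: "a \<in> D \<Longrightarrow> inv a = a"
  using inv_equality[of a a] class_invol by simp

lemma commute_iff_cnj_fixed:
  assumes a: "a \<in> D" and b: "b \<in> D"
  shows "a \<otimes> b = b \<otimes> a \<longleftrightarrow> cnj a b = b"
proof
  assume "a \<otimes> b = b \<otimes> a"
  then show "cnj a b = b" using a b by (simp add: cnj_def m_assoc class_invol)
next
  assume h: "cnj a b = b"
  have "a \<otimes> b = a \<otimes> b \<otimes> a \<otimes> a" using a b by (simp add: m_assoc class_invol)
  also have "\<dots> = b \<otimes> a" using h by (simp add: cnj_def)
  finally show "a \<otimes> b = b \<otimes> a" .
qed

lemma commutes_iff_cnj_fixed: "a \<in> D \<Longrightarrow> b \<in> D \<Longrightarrow> commutes G a b \<longleftrightarrow> cnj a b = b"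
  by (simp add: commutes_def commute_iff_cnj_fixed)

lemma conjg_eq_cnj: "a \<in> D \<Longrightarrow> b \<in> D \<Longrightarrow> conjg G a b = cnj b a"
  by (simp add: conjg_def cnj_def class_inv)

lemma cnj_in: "a \<in> D \<Longrightarrow> b \<in> D \<Longrightarrow> cnj a b \<in> D"
  by (simp add: cnj_def class_conj_closed)

lemma cnj_self: "a \<in> D \<Longrightarrow> cnj a a = a"
  by (simp add: cnj_def class_invol)

lemma cnj_cnj: "a \<in> D \<Longrightarrow> b \<in> D \<Longrightarrow> cnj a (cnj a b) = b"
  by (simp add: cnj_def m_assoc class_invol)

lemma cnj_distrib: "a \<in> D \<Longrightarrow> b \<in> D \<Longrightarrow> c \<in> D \<Longrightarrow> cnj c (cnj a b) = cnj (cnj c a) (cnj c b)"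
  by (simp add: cnj_def m_assoc class_invol)

lemma cnj_inj: "c \<in> D \<Longrightarrow> a \<in> D \<Longrightarrow> b \<in> D \<Longrightarrow> cnj c a = cnj c b \<longleftrightarrow> a = b"
  by (metis cnj_cnj)

lemma cnj_fixed_sym: "a \<in> D \<Longrightarrow> b \<in> D \<Longrightarrow> cnj a b = b \<longleftrightarrow> cnj b a = a"
  by (metis commute_iff_cnj_fixed)

lemma cnj_fixed_cnj: "a \<in> D \<Longrightarrow> b \<in> D \<Longrightarrow> c \<in> D \<Longrightarrow> cnj (cnj c a) (cnj c b) = cnj c b \<longleftrightarrow> cnj a b = b"
  by (metis cnj_distrib cnj_inj cnj_in)

lemma cnj_swap: "a \<in> D \<Longrightarrow> b \<in> D \<Longrightarrow> cnj a b \<noteq> b \<Longrightarrow> cnj a b = cnj b a"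
  by (metis commute_iff_cnj_fixed class_braid cnj_def)

lemma cnj_by_cnj: "a \<in> D \<Longrightarrow> c \<in> D \<Longrightarrow> y \<in> D \<Longrightarrow> cnj (cnj c a) y = cnj c (cnj a (cnj c y))"
  by (metis cnj_distrib cnj_cnj cnj_in)

lemma cnj_fixed_of_line:
  assumes a: "a \<in> D" and b: "b \<in> D" and c: "c \<in> D" and bc: "cnj b c \<noteq> c"
    and ac: "cnj a c = c" and abc: "cnj a (cnj b c) = cnj b c"
  shows "cnj a b = b"
proof -
  have bcD: "cnj b c \<in> D" using b c by (rule cnj_in)
  have e1: "a \<otimes> c = c \<otimes> a" using commute_iff_cnj_fixed[OF a c] ac by simp
  have e2: "a \<otimes> cnj b c = cnj b c \<otimes> a" using commute_iff_cnj_fixed[OF a bcD] abc by simp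
  have bc_eq: "c \<otimes> cnj b c = b \<otimes> c"
    using cnj_swap[OF b c bc] b c by (simp add: cnj_def m_assoc)
  have "a \<otimes> (b \<otimes> c) = a \<otimes> (c \<otimes> cnj b c)" using bc_eq by simp
  also have "\<dots> = c \<otimes> (a \<otimes> cnj b c)" using a c bcD e1 by (simp add: m_assoc[symmetric])
  also have "\<dots> = (b \<otimes> c) \<otimes> a" using e2 bc_eq a bcD c by (simp add: m_assoc[symmetric])
  finally have "a \<otimes> b \<otimes> c = b \<otimes> a \<otimes> c" using a b c e1 by (simp add: m_assoc)
  then have "a \<otimes> b = b \<otimes> a" using a b c by (metis m_closed class_in_carrier r_cancel)
  then show ?thesis using commute_iff_cnj_fixed[OF a b] by simp
qed

lemma noncommuting_line:
  assumes p: "p \<in> D" and q: "q \<in> D" and n: "cnj p q \<noteq> q"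
  shows "p \<noteq> q" "cnj q p \<noteq> p" "cnj q p \<noteq> q" "cnj p q = cnj q p"
    "cnj p (cnj q p) = q" "cnj q (cnj q p) = p" "cnj (cnj q p) p = q" "cnj (cnj q p) q = p"
proof -
  have sw: "cnj p q = cnj q p" using cnj_swap[OF p q n] .
  show "p \<noteq> q" using n cnj_self[OF p] by auto
  show "cnj q p \<noteq> p" using n cnj_fixed_sym[OF p q] by simp
  show "cnj q p \<noteq> q" using n sw by simp
  show "cnj p q = cnj q p" by (rule sw)
  show e1: "cnj p (cnj q p) = q" using sw cnj_cnj[OF p q] by simp
  show e2: "cnj q (cnj q p) = p" using cnj_cnj[OF q p] .
  have r: "cnj q p \<in> D" using cnj_in[OF q p] .
  show "cnj (cnj q p) p = q" using cnj_swap[OF p r] e1 \<open>cnj q p \<noteq> q\<close> by simp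
  show "cnj (cnj q p) q = p" using cnj_swap[OF q r] e2 \<open>cnj q p \<noteq> p\<close> by simp
qed

lemma fischer_line_iff: "fischer_line G D L \<longleftrightarrow> (\<exists>d\<in>D. \<exists>e\<in>D. cnj d e \<noteq> e \<and> L = {d, e, cnj e d})"
  unfolding fischer_line_def using commutes_iff_cnj_fixed conjg_eq_cnj by auto

lemma fischer_line_subset: "fischer_line G D L \<Longrightarrow> L \<subseteq> D"
  unfolding fischer_line_iff using cnj_in by blast

lemma fischer_line_through:
  assumes L: "fischer_line G D L" and u: "u \<in> L" and v: "v \<in> L" and uv: "u \<noteq> v"
  shows "cnj u v \<noteq> v" "L = {u, v, cnj v u}"
proof -
  obtain d e where d: "d \<in> D" and e: "e \<in> D" and n: "cnj d e \<noteq> e" and L: "L = {d, e, cnj e d}"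
    using L unfolding fischer_line_iff by blast
  define x where "x = cnj e d"
  have l: "cnj d e = x" "cnj e d = x" "cnj d x = e" "cnj e x = d" "cnj x d = e" "cnj x e = d"
    "d \<noteq> e" "x \<noteq> d" "x \<noteq> e"
    using noncommuting_line[OF d e n] unfolding x_def by auto
  define Q where "Q a b \<longleftrightarrow> cnj a b \<noteq> b \<and> L = {a, b, cnj b a}" for a b
  have "Q d e" "Q e d" "Q d x" "Q x d" "Q e x" "Q x e"
    unfolding Q_def L x_def[symmetric] using l by (auto simp: insert_commute)
  moreover have "u = d \<or> u = e \<or> u = x" "v = d \<or> v = e \<or> v = x" using u v L x_def by auto
  ultimately have "Q u v" using uv by auto
  then show "cnj u v \<noteq> v" "L = {u, v, cnj v u}" unfolding Q_def by auto
qed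

lemma fischer_subspace_cnj:
  assumes S: "fischer_subspace G D S" and u: "u \<in> S" and v: "v \<in> S" and n: "cnj u v \<noteq> v"
  shows "cnj v u \<in> S"
proof -
  have uD: "u \<in> D" and vD: "v \<in> D" using S u v by (auto simp: fischer_subspace_def)
  define L where "L = {u, v, cnj v u}"
  have "fischer_line G D L" unfolding fischer_line_iff L_def using uD vD n by blast
  moreover have "u \<noteq> v" using n cnj_self[OF uD] by auto
  then have "2 \<le> card (L \<inter> S)"
    using card_mono[of "L \<inter> S" "{u, v}"] u v by (simp add: L_def)
  ultimately show ?thesis using S unfolding fischer_subspace_def L_def by blast
qed

lemma fischer_subspace_D: "fischer_subspace G D D"
  unfolding fischer_subspace_def using fischer_line_subset by blast

section \<open>The algebra \<open>\<A>(D)\<close> and its radical\<close>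

definition bmult :: "'a \<Rightarrow> 'a \<Rightarrow> 'a set" where
  "bmult d e = (if cnj d e = e then {} else {d, e, cnj e d})"

lemma basis_mult_eq_bmult: "d \<in> D \<Longrightarrow> e \<in> D \<Longrightarrow> basis_mult G d e = bmult d e"
  by (simp add: basis_mult_def bmult_def commutes_iff_cnj_fixed conjg_eq_cnj)

lemma bmult_sym: "d \<in> D \<Longrightarrow> e \<in> D \<Longrightarrow> bmult d e = bmult e d"
  unfolding bmult_def by (metis insert_commute cnj_fixed_sym cnj_swap)

lemma bmult_subset: "d \<in> D \<Longrightarrow> e \<in> D \<Longrightarrow> bmult d e \<subseteq> D"
  unfolding bmult_def by (auto intro: cnj_in)

lemma finite_bmult [simp]: "finite (bmult d e)"
  unfolding bmult_def by auto

lemma bmult_commuting: "cnj d e = e \<Longrightarrow> bmult d e = {}"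
  by (simp add: bmult_def)

lemma bmult_self [simp]: "d \<in> D \<Longrightarrow> bmult d d = {}"
  by (simp add: bmult_commuting cnj_self)

lemma sum_bmult:
  assumes "p \<in> D" "q \<in> D" "cnj p q \<noteq> q"
  shows "(\<Sum>x\<in>bmult p q. f x) = f p + f q + f (cnj q p)"
  using noncommuting_line[OF assms] assms(3) by (simp add: bmult_def add.assoc)

lemma indicator_bmult:
  assumes "p \<in> D" "q \<in> D" "cnj p q \<noteq> q"
  shows "(indicator (bmult p q) z :: bit) = indicator {p} z + indicator {q} z + indicator {cnj q p} z"
  using noncommuting_line[OF assms] assms(3) by (auto simp: bmult_def indicator_def)

definition form :: "'a \<Rightarrow> 'a \<Rightarrow> bit" where "form a b = of_bool (cnj a b \<noteq> b)"

lemma form_cnj: "a \<in> D \<Longrightarrow> b \<in> D \<Longrightarrow> c \<in> D \<Longrightarrow> form (cnj c a) (cnj c b) = form a b"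
  by (simp add: form_def cnj_fixed_cnj)

lemma form_bmult_assoc:
  assumes g: "g \<in> D" and p: "p \<in> D" and q: "q \<in> D"
  shows "(\<Sum>x\<in>bmult p q. form g x) = (\<Sum>y\<in>bmult g p. form y q)"
proof (cases "cnj p q = q")
  case pq: True
  show ?thesis
  proof (cases "cnj g p = p")
    case True then show ?thesis using pq by (simp add: bmult_commuting)
  next
    case False
    have "form (cnj p g) q = form (cnj p g) (cnj p q)" using pq by simp
    also have "\<dots> = form g q" using form_cnj[OF g q p] .
    finally have "form (cnj p g) q = form g q" .
    moreover have "form p q = 0" using pq by (simp add: form_def)
    ultimately show ?thesis using sum_bmult[OF g p False, of "\<lambda>y. form y q"] pq
      by (simp add: bmult_commuting)
  qed
next
  case pq: False
  have sw: "cnj p q = cnj q p" using cnj_swap[OF p q pq] .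
  have shift: "form (cnj p g) q = form g (cnj q p)"
    using form_cnj[OF g cnj_in[OF p q] p] cnj_cnj[OF p q] sw by simp
  show ?thesis
  proof (cases "cnj g p = p")
    case True
    then have "cnj p g = g" using cnj_fixed_sym[OF g p] by simp
    then have "form g (cnj q p) = form g q" using shift by simp
    moreover have "form g p = 0" using True by (simp add: form_def)
    ultimately show ?thesis using sum_bmult[OF p q pq, of "form g"] True
      by (simp add: bmult_commuting add.assoc)
  next
    case False
    then have "form g p = 1" "form p q = 1" using pq by (simp_all add: form_def)
    then show ?thesis using sum_bmult[OF p q pq, of "form g"] sum_bmult[OF g p False, of "\<lambda>y. form y q"] shift
      by (simp add: ac_simps)
  qed
qed

lemma mem_algA [simp]: "P \<in> algA D \<longleftrightarrow> finite P \<and> P \<subseteq> D"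
  by (simp add: algA_def)

lemma indicator_algA_mult:
  assumes "P \<in> algA D" "Q \<in> algA D"
  shows "(indicator (algA_mult G P Q) z :: bit) = (\<Sum>d\<in>P. \<Sum>e\<in>Q. indicator (bmult d e) z)"
proof -
  have fin: "finite (P \<times> Q)" using assms by simp
  have "{(d, e). d \<in> P \<and> e \<in> Q \<and> z \<in> basis_mult G d e} = {x \<in> P \<times> Q. z \<in> bmult (fst x) (snd x)}"
    using assms by (auto simp: basis_mult_eq_bmult subset_iff)
  then have "z \<in> algA_mult G P Q \<longleftrightarrow> (\<Sum>x\<in>P \<times> Q. of_bool (z \<in> bmult (fst x) (snd x)) :: bit) = 1"
    unfolding algA_mult_def using odd_card_iff_sum_bit[OF fin] by simp
  moreover have "(\<Sum>x\<in>P \<times> Q. of_bool (z \<in> bmult (fst x) (snd x)) :: bit)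
      = (\<Sum>d\<in>P. \<Sum>e\<in>Q. indicator (bmult d e) z)"
    by (simp add: sum.cartesian_product indicator_def case_prod_beta)
  ultimately show ?thesis by (auto simp: indicator_def)
qed

lemma algA_mult_subset:
  assumes "P \<in> algA D" "Q \<in> algA D"
  shows "algA_mult G P Q \<subseteq> (\<Union>d\<in>P. \<Union>e\<in>Q. bmult d e)"
proof
  fix z assume "z \<in> algA_mult G P Q"
  then have "(\<Sum>d\<in>P. \<Sum>e\<in>Q. indicator (bmult d e) z :: bit) \<noteq> 0"
    using indicator_algA_mult[OF assms, of z] by simp
  then obtain d e where "d \<in> P" "e \<in> Q" "z \<in> bmult d e"
    by (metis (no_types, lifting) indicator_simps(2) sum.neutral)
  then show "z \<in> (\<Union>d\<in>P. \<Union>e\<in>Q. bmult d e)" by blast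
qed

lemma algA_mult_closed:
  assumes "P \<in> algA D" "Q \<in> algA D"
  shows "algA_mult G P Q \<in> algA D"
proof -
  have "(\<Union>d\<in>P. \<Union>e\<in>Q. bmult d e) \<in> algA D" using assms bmult_subset by auto
  then show ?thesis using algA_mult_subset[OF assms] by (auto intro: finite_subset)
qed

lemma sum_algA_mult:
  assumes P: "P \<in> algA D" and Q: "Q \<in> algA D"
  shows "(\<Sum>x\<in>algA_mult G P Q. h x :: bit) = (\<Sum>d\<in>P. \<Sum>e\<in>Q. \<Sum>x\<in>bmult d e. h x)"
proof -
  define U where "U = (\<Union>d\<in>P. \<Union>e\<in>Q. bmult d e)"
  have U: "finite U" using P Q by (simp add: U_def)
  have "(\<Sum>x\<in>algA_mult G P Q. h x) = (\<Sum>x\<in>U. indicator (algA_mult G P Q) x * h x)"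
    using algA_mult_subset[OF P Q] U by (simp add: U_def Int_absorb1)
  also have "\<dots> = (\<Sum>d\<in>P. \<Sum>e\<in>Q. \<Sum>x\<in>U. indicator (bmult d e) x * h x)"
    by (simp add: indicator_algA_mult[OF P Q] sum_distrib_right sum.swap[of _ U])
  also have "\<dots> = (\<Sum>d\<in>P. \<Sum>e\<in>Q. \<Sum>x\<in>bmult d e. h x)"
  proof (rule sum.cong[OF refl], rule sum.cong[OF refl])
    fix d e assume "d \<in> P" "e \<in> Q"
    then have "U \<inter> bmult d e = bmult d e" by (auto simp: U_def)
    then show "(\<Sum>x\<in>U. indicator (bmult d e) x * h x) = (\<Sum>x\<in>bmult d e. h x)"
      using U by simp
  qed
  finally show ?thesis .
qed

lemma vanishing_iff_form:
  "vanishing G D M \<longleftrightarrow> M \<in> algA D \<and> (\<forall>g\<in>D. (\<Sum>x\<in>M. form g x) = 0)"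
proof -
  have "even (card {e \<in> M. \<not> commutes G g e}) \<longleftrightarrow> (\<Sum>x\<in>M. form g x) = 0"
    if "M \<in> algA D" "g \<in> D" for g
  proof -
    have "{e \<in> M. \<not> commutes G g e} = {e \<in> M. cnj g e \<noteq> e}"
      using that by (auto simp: commutes_iff_cnj_fixed)
    then show ?thesis using that odd_card_iff_sum_bit[of M "\<lambda>e. cnj g e \<noteq> e"]
      by (auto simp: form_def)
  qed
  then show ?thesis unfolding vanishing_def by blast
qed

lemma vanishing_empty: "vanishing G D {}"
  by (simp add: vanishing_def)

lemma vanishing_sum:
  assumes I: "finite I" and F: "\<And>i. i \<in> I \<Longrightarrow> vanishing G D (F i)"
    and M: "\<And>z. (indicator M z :: bit) = (\<Sum>i\<in>I. indicator (F i) z)"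
  shows "vanishing G D M"
proof -
  define U where "U = (\<Union>i\<in>I. F i)"
  have U: "U \<in> algA D" unfolding U_def using I F by (auto simp: vanishing_def)
  have "M \<subseteq> U"
  proof
    fix z assume "z \<in> M"
    then have "(\<Sum>i\<in>I. indicator (F i) z :: bit) \<noteq> 0" using M[of z] by simp
    then show "z \<in> U" unfolding U_def by (metis (no_types, lifting) UN_I indicator_simps(2) sum.neutral)
  qed
  then have M_in: "M \<in> algA D" using U by (auto intro: finite_subset)
  have UF: "U \<inter> F i = F i" if "i \<in> I" for i using that by (auto simp: U_def)
  have "(\<Sum>x\<in>M. form g x) = 0" if g: "g \<in> D" for g
  proof -
    have "(\<Sum>x\<in>M. form g x) = (\<Sum>x\<in>U. indicator M x * form g x)"
      using U \<open>M \<subseteq> U\<close> by (simp add: Int_absorb1)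
    also have "\<dots> = (\<Sum>i\<in>I. \<Sum>x\<in>U. indicator (F i) x * form g x)"
      by (simp add: M sum_distrib_right sum.swap[of _ U])
    also have "\<dots> = (\<Sum>i\<in>I. \<Sum>x\<in>F i. form g x)"
      using U UF by simp
    also have "\<dots> = 0" using F g by (simp add: vanishing_iff_form)
    finally show ?thesis .
  qed
  then show ?thesis using M_in by (simp add: vanishing_iff_form)
qed

lemma algA_mult_vanishing:
  assumes P: "P \<in> algA D" and Q: "vanishing G D Q"
  shows "vanishing G D (algA_mult G P Q)"
proof -
  have Q_in: "Q \<in> algA D" and Q0: "\<And>y. y \<in> D \<Longrightarrow> (\<Sum>e\<in>Q. form y e) = 0"
    using Q by (auto simp: vanishing_iff_form)
  have "(\<Sum>x\<in>algA_mult G P Q. form g x) = 0" if g: "g \<in> D" for g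
  proof -
    have "(\<Sum>x\<in>algA_mult G P Q. form g x) = (\<Sum>d\<in>P. \<Sum>e\<in>Q. \<Sum>x\<in>bmult d e. form g x)"
      by (rule sum_algA_mult[OF P Q_in])
    also have "\<dots> = (\<Sum>d\<in>P. \<Sum>e\<in>Q. \<Sum>y\<in>bmult g d. form y e)"
      using P Q_in g by (intro sum.cong refl form_bmult_assoc) auto
    also have "\<dots> = (\<Sum>d\<in>P. \<Sum>y\<in>bmult g d. \<Sum>e\<in>Q. form y e)"
      by (simp add: sum.swap[of _ Q])
    also have "\<dots> = 0"
    proof (rule sum.neutral, rule ballI, rule sum.neutral, rule ballI)
      fix d y assume "d \<in> P" "y \<in> bmult g d"
      then have "y \<in> D" using P bmult_subset[OF g] by auto
      then show "(\<Sum>e\<in>Q. form y e) = 0" by (rule Q0)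
    qed
    finally show ?thesis .
  qed
  then show ?thesis using algA_mult_closed[OF P Q_in] by (simp add: vanishing_iff_form)
qed

lemma algA_mult_comm:
  assumes "P \<in> algA D" "Q \<in> algA D"
  shows "algA_mult G P Q = algA_mult G Q P"
proof -
  have "(\<Sum>d\<in>P. \<Sum>e\<in>Q. indicator (bmult d e) z :: bit) = (\<Sum>e\<in>Q. \<Sum>d\<in>P. indicator (bmult e d) z)"
    for z
    using assms by (subst sum.swap) (auto intro!: sum.cong simp: bmult_sym subset_iff)
  then show ?thesis using assms by (simp add: set_eq_iff_indicator_bit indicator_algA_mult)
qed

lemma algA_mult_self: "P \<in> algA D \<Longrightarrow> algA_mult G P P = {}"
  unfolding set_eq_iff_indicator_bit
  by (auto simp: indicator_algA_mult intro!: sum_bit_symmetric_square simp: bmult_sym subset_iff)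

section \<open>Jacobiators\<close>

definition jacobiator :: "'a set \<Rightarrow> 'a set \<Rightarrow> 'a set \<Rightarrow> 'a set" where
  "jacobiator P Q R = symdiff (symdiff (algA_mult G P (algA_mult G Q R))
     (algA_mult G Q (algA_mult G R P))) (algA_mult G R (algA_mult G P Q))"

lemma indicator_jacobiator:
  "(indicator (jacobiator P Q R) z :: bit) = indicator (algA_mult G P (algA_mult G Q R)) z
     + indicator (algA_mult G Q (algA_mult G R P)) z + indicator (algA_mult G R (algA_mult G P Q)) z"
  by (simp add: jacobiator_def indicator_symdiff)

lemma jacobiator_cycle: "jacobiator Q R P = jacobiator P Q R"
  by (simp add: set_eq_iff_indicator_bit indicator_jacobiator ac_simps)

lemma algA_mult_singletons: "p \<in> D \<Longrightarrow> q \<in> D \<Longrightarrow> algA_mult G {p} {q} = bmult p q"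
  by (simp add: set_eq_iff_indicator_bit indicator_algA_mult)

lemma indicator_singleton_mult:
  "p \<in> D \<Longrightarrow> M \<in> algA D \<Longrightarrow> (indicator (algA_mult G {p} M) z :: bit) = (\<Sum>y\<in>M. indicator (bmult p y) z)"
  by (simp add: indicator_algA_mult)

lemma indicator_algA_mult_mult:
  assumes P: "P \<in> algA D" and Q: "Q \<in> algA D" and R: "R \<in> algA D"
  shows "(indicator (algA_mult G P (algA_mult G Q R)) z :: bit)
    = (\<Sum>p\<in>P. \<Sum>q\<in>Q. \<Sum>r\<in>R. indicator (algA_mult G {p} (algA_mult G {q} {r})) z)"
proof -
  have QR: "algA_mult G Q R \<in> algA D" by (rule algA_mult_closed[OF Q R])
  have "(indicator (algA_mult G P (algA_mult G Q R)) z :: bit)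
      = (\<Sum>y\<in>algA_mult G Q R. \<Sum>p\<in>P. indicator (bmult p y) z)"
    unfolding indicator_algA_mult[OF P QR] by (rule sum.swap)
  also have "\<dots> = (\<Sum>q\<in>Q. \<Sum>r\<in>R. \<Sum>y\<in>bmult q r. \<Sum>p\<in>P. indicator (bmult p y) z)"
    by (rule sum_algA_mult[OF Q R])
  also have "\<dots> = (\<Sum>q\<in>Q. \<Sum>r\<in>R. \<Sum>p\<in>P. \<Sum>y\<in>bmult q r. indicator (bmult p y) z)"
    by (rule sum.cong[OF refl])+ (rule sum.swap)
  also have "\<dots> = (\<Sum>p\<in>P. \<Sum>q\<in>Q. \<Sum>r\<in>R. \<Sum>y\<in>bmult q r. indicator (bmult p y) z)"
    by (rule sum_rotate3)
  also have "\<dots> = (\<Sum>p\<in>P. \<Sum>q\<in>Q. \<Sum>r\<in>R. indicator (algA_mult G {p} (algA_mult G {q} {r})) z)"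
  proof (rule sum.cong[OF refl])+
    fix p q r assume "p \<in> P" "q \<in> Q" "r \<in> R"
    then have "p \<in> D" "q \<in> D" "r \<in> D" using P Q R by auto
    moreover have "bmult q r \<in> algA D" using \<open>q \<in> D\<close> \<open>r \<in> D\<close> bmult_subset by simp
    ultimately show "(\<Sum>y\<in>bmult q r. indicator (bmult p y) z :: bit) = indicator (algA_mult G {p} (algA_mult G {q} {r})) z"
      by (simp add: algA_mult_singletons indicator_singleton_mult)
  qed
  finally show ?thesis .
qed

lemma indicator_jacobiator_sum:
  assumes P: "P \<in> algA D" and Q: "Q \<in> algA D" and R: "R \<in> algA D"
  shows "(indicator (jacobiator P Q R) z :: bit)
    = (\<Sum>p\<in>P. \<Sum>q\<in>Q. \<Sum>r\<in>R. indicator (jacobiator {p} {q} {r}) z)"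
proof -
  have "(indicator (algA_mult G Q (algA_mult G R P)) z :: bit)
      = (\<Sum>p\<in>P. \<Sum>q\<in>Q. \<Sum>r\<in>R. indicator (algA_mult G {q} (algA_mult G {r} {p})) z)"
    unfolding indicator_algA_mult_mult[OF Q R P] by (rule sum_rotate3)
  moreover have "(indicator (algA_mult G R (algA_mult G P Q)) z :: bit)
      = (\<Sum>p\<in>P. \<Sum>q\<in>Q. \<Sum>r\<in>R. indicator (algA_mult G {r} (algA_mult G {p} {q})) z)"
    unfolding indicator_algA_mult_mult[OF R P Q] by (rule sum_rotate3[symmetric])
  ultimately show ?thesis
    unfolding indicator_jacobiator indicator_algA_mult_mult[OF P Q R] by (simp add: sum.distrib)
qed

lemma jacobiator_vanishing:
  assumes P: "P \<in> algA D" and Q: "Q \<in> algA D" and R: "R \<in> algA D"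
    and basis: "\<And>p q r. p \<in> D \<Longrightarrow> q \<in> D \<Longrightarrow> r \<in> D \<Longrightarrow> vanishing G D (jacobiator {p} {q} {r})"
  shows "vanishing G D (jacobiator P Q R)"
proof (rule vanishing_sum[where I = "P \<times> Q \<times> R" and F = "\<lambda>(p, q, r). jacobiator {p} {q} {r}"])
  show "finite (P \<times> Q \<times> R)" using P Q R by simp
  show "vanishing G D ((\<lambda>(p, q, r). jacobiator {p} {q} {r}) i)" if "i \<in> P \<times> Q \<times> R" for i
    using that P Q R basis by (auto simp: subset_iff)
  show "(indicator (jacobiator P Q R) z :: bit) = (\<Sum>i\<in>P \<times> Q \<times> R. indicator ((\<lambda>(p, q, r). jacobiator {p} {q} {r}) i) z)" for z
    by (simp add: indicator_jacobiator_sum[OF P Q R] sum.cartesian_product case_prod_beta)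
qed

lemma indicator_mult_bmult:
  assumes p: "p \<in> D" and q: "q \<in> D" and r: "r \<in> D"
  shows "(indicator (algA_mult G {p} (bmult q r)) z :: bit) = (if cnj q r = r then 0
    else indicator (bmult p q) z + indicator (bmult p r) z + indicator (bmult p (cnj r q)) z)"
  using p bmult_subset[OF q r]
  by (simp add: indicator_singleton_mult bmult_commuting sum_bmult[OF q r] add.assoc)

lemma indicator_jacobiator_basis:
  assumes d: "d \<in> D" and e: "e \<in> D" and f: "f \<in> D"
  shows "(indicator (jacobiator {d} {e} {f}) z :: bit) =
       (if cnj e f = f then 0 else indicator (bmult d e) z + indicator (bmult d f) z + indicator (bmult d (cnj f e)) z)
     + (if cnj f d = d then 0 else indicator (bmult e f) z + indicator (bmult e d) z + indicator (bmult e (cnj d f)) z)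
     + (if cnj d e = e then 0 else indicator (bmult f d) z + indicator (bmult f e) z + indicator (bmult f (cnj e d)) z)"
  using assms
  by (simp add: indicator_jacobiator algA_mult_singletons indicator_mult_bmult del: indicator_simps)

lemma jacobiator_centralizer:
  assumes d: "d \<in> D" and e: "e \<in> D" and f: "f \<in> D" and de: "cnj d e = e" and df: "cnj d f = f"
  shows "jacobiator {d} {e} {f} = {}"
proof -
  have "cnj d (cnj f e) = cnj f e" using cnj_distrib[OF f e d] de df by simp
  moreover have "cnj f d = d" using df cnj_fixed_sym[OF d f] by simp
  ultimately show ?thesis using assms
    by (simp add: set_eq_iff_indicator_bit indicator_jacobiator_basis bmult_commuting)
qed

lemma jacobiator_path:
  assumes d: "d \<in> D" and e: "e \<in> D" and f: "f \<in> D"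
    and df: "cnj d f = f" and de: "cnj d e \<noteq> e" and ef: "cnj e f \<noteq> f"
  shows "jacobiator {d} {e} {f} = {}"
proof -
  have fd: "cnj f d = d" and fe: "cnj f e \<noteq> e" and ed: "cnj e d \<noteq> d"
    using df ef de cnj_fixed_sym d e f by auto
  have feD: "cnj f e \<in> D" and edD: "cnj e d \<in> D" using cnj_in d e f by auto
  have n1: "cnj d (cnj f e) \<noteq> cnj f e"
    using cnj_fixed_of_line[OF d e f ef df] cnj_swap[OF e f ef] de by auto
  have n2: "cnj f (cnj e d) \<noteq> cnj e d"
    using cnj_fixed_of_line[OF f e d ed fd] fe by auto
  have X: "cnj (cnj f e) d = cnj d (cnj f e)" "cnj (cnj e d) f = cnj f (cnj e d)"
    "cnj f (cnj e d) = cnj d (cnj f e)"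
    using cnj_swap[OF d feD n1] cnj_swap[OF f edD n2] cnj_distrib[OF e d f] fd cnj_swap[OF d e de]
    by auto
  have "(indicator (jacobiator {d} {e} {f}) z :: bit) = 0" for z
  proof -
    \<comment> \<open>the lines \<open>d e\<close>, \<open>d e\<^sup>f\<close>, \<open>f e\<close>, \<open>f d\<^sup>e\<close> cover each of their points twice\<close>
    have "(indicator (jacobiator {d} {e} {f}) z :: bit) = indicator (bmult d e) z
        + indicator (bmult d (cnj f e)) z + indicator (bmult f e) z + indicator (bmult f (cnj e d)) z"
      using indicator_jacobiator_basis[OF d e f, of z] df fd de ef
      by (simp add: bmult_commuting ac_simps del: indicator_simps)
    also have "\<dots> = 0"
      using indicator_bmult[OF d e de] indicator_bmult[OF d feD n1] indicator_bmult[OF f e fe]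
        indicator_bmult[OF f edD n2] X cnj_swap[OF e f ef]
      by (simp add: ac_simps del: indicator_simps)
    finally show ?thesis .
  qed
  then show ?thesis by (simp add: set_eq_iff_indicator_bit)
qed

lemma jacobiator_commuting_pair:
  assumes d: "d \<in> D" and e: "e \<in> D" and f: "f \<in> D" and df: "cnj d f = f"
  shows "jacobiator {d} {e} {f} = {}"
proof (cases "cnj d e = e")
  case True
  then show ?thesis using jacobiator_centralizer[OF d e f _ df] by simp
next
  case de: False
  show ?thesis
  proof (cases "cnj e f = f")
    case True
    then have "jacobiator {f} {d} {e} = {}"
      using jacobiator_centralizer[OF f d e] df cnj_fixed_sym d e f by auto
    then show ?thesis by (simp add: jacobiator_cycle)
  next
    case False
    then show ?thesis using jacobiator_path[OF d e f df de] by simp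
  qed
qed

lemma indicator_jacobiator_triangle:
  assumes d: "d \<in> D" and e: "e \<in> D" and f: "f \<in> D"
    and de: "cnj d e \<noteq> e" and ef: "cnj e f \<noteq> f" and fd: "cnj f d \<noteq> d"
  shows "(indicator (jacobiator {d} {e} {f}) z :: bit) =
    indicator (bmult d (cnj f e)) z + indicator (bmult e (cnj d f)) z + indicator (bmult f (cnj e d)) z"
  using indicator_jacobiator_basis[OF d e f, of z] de ef fd bmult_sym[OF d e] bmult_sym[OF e f] bmult_sym[OF f d]
  by (simp add: ac_simps del: indicator_simps)

lemma jacobiator_degenerate_triangle:
  assumes d: "d \<in> D" and e: "e \<in> D" and f: "f \<in> D"
    and de: "cnj d e \<noteq> e" and ef: "cnj e f \<noteq> f" and fd: "cnj f d \<noteq> d"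
    and d_fe: "cnj d (cnj f e) = cnj f e"
  shows "jacobiator {d} {e} {f} = {}"
proof -
  have feD: "cnj f e \<in> D" using cnj_in f e by blast
  have "cnj (cnj f e) d = d" using d_fe cnj_fixed_sym[OF d feD] by simp
  then have "cnj e (cnj d f) = cnj d f"
    using cnj_fixed_cnj[OF e cnj_in[OF d f] f] cnj_cnj[OF f d] cnj_swap[OF f d fd] by simp
  moreover have "cnj f (cnj e d) = cnj e d"
    using cnj_fixed_cnj[OF f cnj_in[OF e d] e] cnj_cnj[OF e d] cnj_swap[OF e f ef] \<open>cnj (cnj f e) d = d\<close>
    by simp
  ultimately show ?thesis
    using indicator_jacobiator_triangle[OF assms(1-6)] d_fe
    by (simp add: set_eq_iff_indicator_bit bmult_commuting)
qed

lemma jacobiator_degenerate: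
  assumes d: "d \<in> D" and e: "e \<in> D" and f: "f \<in> D"
    and degenerate: "\<not> (cnj d e \<noteq> e \<and> cnj e f \<noteq> f \<and> cnj d f \<noteq> f \<and> cnj d (cnj e f) \<noteq> cnj e f)"
  shows "jacobiator {d} {e} {f} = {}"
proof -
  consider "cnj d f = f" | "cnj d e = e" | "cnj e f = f"
    | "cnj d e \<noteq> e" "cnj e f \<noteq> f" "cnj d f \<noteq> f" "cnj d (cnj e f) = cnj e f"
    using degenerate by blast
  then show ?thesis
  proof cases
    case 1
    then show ?thesis using jacobiator_commuting_pair[OF d e f] by simp
  next
    case 2
    then have "jacobiator {e} {f} {d} = {}"
      using jacobiator_commuting_pair[OF e f d] cnj_fixed_sym[OF d e] by simp
    then show ?thesis by (simp add: jacobiator_cycle)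
  next
    case 3
    then have "jacobiator {f} {d} {e} = {}"
      using jacobiator_commuting_pair[OF f d e] cnj_fixed_sym[OF e f] by simp
    then show ?thesis by (metis jacobiator_cycle)
  next
    case 4
    then show ?thesis
      using jacobiator_degenerate_triangle[OF d e f] cnj_fixed_sym[OF d f] cnj_swap[OF e f] by simp
  qed
qed

section \<open>Charts of affine planes\<close>

text \<open>A chart of an affine plane of \<open>\<Pi>(D)\<close>: its points are labelled by \<open>\<bbbF>\<^sub>3\<^sup>2\<close> so that the
  third point on the line through \<open>g x\<close> and \<open>g y\<close> is \<open>g (- x - y)\<close>.\<close>

definition plane_chart :: "(3 \<times> 3 \<Rightarrow> 'a) \<Rightarrow> bool" where
  "plane_chart g \<longleftrightarrow> (\<forall>x. g x \<in> D) \<and> (\<forall>x y. cnj (g x) (g y) = g (- y - x)) \<and>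
     (\<forall>x y. x \<noteq> y \<longrightarrow> cnj (g x) (g y) \<noteq> g y)"

lemma chart_in: "plane_chart g \<Longrightarrow> g x \<in> D"
  unfolding plane_chart_def by blast

lemma chart_cnj: "plane_chart g \<Longrightarrow> cnj (g x) (g y) = g (- y - x)"
  unfolding plane_chart_def by blast

lemma chart_noncommuting: "plane_chart g \<Longrightarrow> x \<noteq> y \<Longrightarrow> cnj (g x) (g y) \<noteq> g y"
  unfolding plane_chart_def by blast

lemma chart_inj:
  assumes g: "plane_chart g"
  shows "inj g"
proof (rule injI, rule ccontr)
  fix x y assume "g x = g y" "x \<noteq> y"
  then show False using chart_noncommuting[OF g, of x y] cnj_self[OF chart_in[OF g, of y]] by simp
qed

lemma chart_bmult: "plane_chart g \<Longrightarrow> x \<noteq> y \<Longrightarrow> bmult (g x) (g y) = g ` {x, y, - x - y}"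
  unfolding bmult_def using chart_noncommuting[of g x y] chart_cnj[of g y x] by simp

lemma jacobiator_chart:
  assumes g: "plane_chart g"
  shows "jacobiator {g (0,0)} {g (1,0)} {g (0,1)} = range g"
proof -
  have "(indicator (jacobiator {g (0,0)} {g (1,0)} {g (0,1)}) z :: bit) = indicator (range g) z" for z
  proof -
    have "(indicator (jacobiator {g (0,0)} {g (1,0)} {g (0,1)}) z :: bit) =
        indicator (bmult (g (0,0)) (cnj (g (0,1)) (g (1,0)))) z
        + indicator (bmult (g (1,0)) (cnj (g (0,0)) (g (0,1)))) z
        + indicator (bmult (g (0,1)) (cnj (g (1,0)) (g (0,0)))) z"
      by (rule indicator_jacobiator_triangle) (simp_all add: g chart_in chart_noncommuting)
    also have "\<dots> = indicator (g ` {(0,0), (2,2), (1,1)}) z + indicator (g ` {(1,0), (0,2), (2,1)}) z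
        + indicator (g ` {(0,1), (2,0), (1,2)}) z"
    proof -
      have "cnj (g (0,1)) (g (1,0)) = g (2,2)" "cnj (g (0,0)) (g (0,1)) = g (0,2)"
        "cnj (g (1,0)) (g (0,0)) = g (2,0)"
        using chart_cnj[OF g] by simp_all
      moreover have "bmult (g (0,0)) (g (2,2)) = g ` {(0,0), (2,2), (1,1)}"
        "bmult (g (1,0)) (g (0,2)) = g ` {(1,0), (0,2), (2,1)}"
        "bmult (g (0,1)) (g (2,0)) = g ` {(0,1), (2,0), (1,2)}"
        using chart_bmult[OF g] by simp_all
      ultimately show ?thesis by (simp only:)
    qed
    also have "\<dots> = indicator (range g) z"
    proof (cases "z \<in> range g")
      case True
      then obtain p where "z = g p" by blast
      then show ?thesis
        by (simp only: indicator_image[OF chart_inj[OF g]] parallel_lines_cover) simp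
    next
      case False
      then have "(indicator (g ` A) z :: bit) = 0" for A by (auto simp: indicator_def)
      then show ?thesis by (simp only: add_0_left)
    qed
    finally show ?thesis .
  qed
  then show ?thesis by (simp add: set_eq_iff_indicator_bit)
qed

lemma fischer_line_chart_image:
  assumes g: "plane_chart g"
  shows "fischer_line G D (g ` M) \<longleftrightarrow> (\<exists>x y. x \<noteq> y \<and> M = {x, y, - x - y})"
proof
  assume "fischer_line G D (g ` M)"
  then obtain d e where d: "d \<in> D" and n: "cnj d e \<noteq> e" and L: "g ` M = {d, e, cnj e d}"
    unfolding fischer_line_iff by blast
  have "d \<in> g ` M" "e \<in> g ` M" using L by auto
  then obtain x y where x: "x \<in> M" "d = g x" and y: "y \<in> M" "e = g y" by blast
  have xy: "x \<noteq> y" using n x y cnj_self[OF d] by auto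
  have "cnj e d = g (- x - y)" using x y chart_cnj[OF g] by (simp add: algebra_simps)
  then have "g ` M = g ` {x, y, - x - y}" using L x y by simp
  then have "M = {x, y, - x - y}" by (simp only: inj_image_eq_iff[OF chart_inj[OF g]])
  then show "\<exists>x y. x \<noteq> y \<and> M = {x, y, - x - y}" using xy by blast
next
  assume "\<exists>x y. x \<noteq> y \<and> M = {x, y, - x - y}"
  then obtain x y where xy: "x \<noteq> y" and M: "M = {x, y, - x - y}" by blast
  have "g ` M = {g x, g y, cnj (g y) (g x)}" using M chart_cnj[OF g] by (simp add: algebra_simps)
  then show "fischer_line G D (g ` M)"
    unfolding fischer_line_iff using chart_in[OF g] chart_noncommuting[OF g xy] by blast
qed

lemma chart_subspace:
  assumes g: "plane_chart g"
  shows "fischer_subspace G D (range g)"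
  unfolding fischer_subspace_def
proof (intro conjI allI impI)
  show "range g \<subseteq> D" using chart_in[OF g] by blast
  fix L assume L: "fischer_line G D L \<and> 2 \<le> card (L \<inter> range g)"
  then have "\<not> card (L \<inter> range g) \<le> Suc 0" by simp
  moreover have "finite (L \<inter> range g)"
    using L unfolding fischer_line_iff by auto
  ultimately obtain u v where "u \<in> L \<inter> range g" "v \<in> L \<inter> range g" "u \<noteq> v"
    using card_le_Suc0_iff_eq by blast
  then obtain x y where uv: "u \<in> L" "v \<in> L" "u \<noteq> v" and x: "u = g x" and y: "v = g y" by blast
  have "L = {u, v, cnj v u}" using fischer_line_through[OF conjunct1[OF L] uv] by blast
  also have "\<dots> = {g x, g y, g (- x - y)}" unfolding x y chart_cnj[OF g] ..
  finally show "L \<subseteq> range g" by blast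
qed

lemma chart_span:
  assumes g: "plane_chart g"
  shows "fischer_span G D ({g (0,0), g (1,0), g (2,0)} \<union> {g (0,0), g (0,1), g (0,2)}) = range g"
    (is "fischer_span G D ?A = _")
proof
  show "fischer_span G D ?A \<subseteq> range g"
    unfolding fischer_span_def using chart_subspace[OF g] by blast
  show "range g \<subseteq> fischer_span G D ?A"
    unfolding fischer_span_def
  proof (intro subsetI CollectI allI impI)
    fix z S assume "z \<in> range g" and S: "fischer_subspace G D S \<and> ?A \<subseteq> S"
    have third: "g (- x - y) \<in> S" if "g x \<in> S" "g y \<in> S" "x \<noteq> y" for x y
    proof -
      have "cnj (g y) (g x) \<in> S"
        using fischer_subspace_cnj[OF conjunct1[OF S] that(1,2)] chart_noncommuting[OF g that(3)] .
      then show ?thesis using chart_cnj[OF g] by simp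
    qed
    have "g (0,0) \<in> S" "g (1,0) \<in> S" "g (2,0) \<in> S" "g (0,1) \<in> S" "g (0,2) \<in> S" using S by auto
    moreover from this have "g (2,2) \<in> S" using third[of "(1,0)" "(0,1)"] by simp
    moreover from calculation have "g (1,1) \<in> S" using third[of "(0,0)" "(2,2)"] by simp
    moreover from calculation have "g (2,1) \<in> S" using third[of "(1,0)" "(0,2)"] by simp
    moreover from calculation have "g (1,2) \<in> S" using third[of "(0,1)" "(2,0)"] by simp
    ultimately have "\<forall>p. g p \<in> S" unfolding all_3x3 by blast
    then show "z \<in> S" using \<open>z \<in> range g\<close> by blast
  qed
qed

lemma chart_affine_plane:
  assumes g: "plane_chart g"
  shows "fischer_affine_plane G D (range g)"
proof -
  let ?L1 = "{g (0,0), g (1,0), g (2,0)}" and ?L2 = "{g (0,0), g (0,1), g (0,2)}"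
  have "fischer_line G D (g ` {(0,0), (1,0), - (0,0) - (1,0)})"
    unfolding fischer_line_chart_image[OF g] by (intro exI[of _ "(0,0)"] exI[of _ "(1,0)"]) simp
  moreover have "fischer_line G D (g ` {(0,0), (0,1), - (0,0) - (0,1)})"
    unfolding fischer_line_chart_image[OF g] by (intro exI[of _ "(0,0)"] exI[of _ "(0,1)"]) simp
  ultimately have lines: "fischer_line G D ?L1" "fischer_line G D ?L2" by simp_all
  have "g (0,1) \<notin> ?L1" using inj_eq[OF chart_inj[OF g]] by simp
  then have "?L1 \<noteq> ?L2" by blast
  moreover have "iso_AG23 G D (range g)"
    unfolding iso_AG23_def
  proof (intro exI[of _ "inv_into UNIV g"] conjI allI impI)
    show "bij_betw (inv_into UNIV g) (range g) UNIV"
      using bij_betw_inv_into[OF inj_on_imp_bij_betw[OF chart_inj[OF g]]] by simp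
    fix L assume "L \<subseteq> range g"
    then have "L = g ` (inv_into UNIV g ` L)" by (simp add: image_image f_inv_into_f subset_iff)
    then show "fischer_line G D L \<longleftrightarrow> ag23_line (inv_into UNIV g ` L)"
      by (metis fischer_line_chart_image[OF g] ag23_line_iff)
  qed
  ultimately show ?thesis unfolding fischer_affine_plane_def
    using lines chart_span[OF g] by blast
qed

context
  fixes S and f :: "'a \<Rightarrow> 3 \<times> 3"
  assumes SD: "S \<subseteq> D" and f: "bij_betw f S UNIV"
    and lines: "\<And>L. L \<subseteq> S \<Longrightarrow> fischer_line G D L \<longleftrightarrow> ag23_line (f ` L)"
begin

lemma inv_iso_in: "inv_into S f x \<in> S"
  using bij_betw_inv_into[OF f] by (auto simp: bij_betw_def)

lemma inv_iso_in_class: "inv_into S f x \<in> D"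
  using inv_iso_in SD by blast

lemma inv_iso_third_point:
  assumes xy: "x \<noteq> y"
  shows "cnj (inv_into S f x) (inv_into S f y) \<noteq> inv_into S f y"
    and "cnj (inv_into S f x) (inv_into S f y) = inv_into S f (- x - y)"
proof -
  let ?g = "inv_into S f"
  have fg: "f (?g x) = x" for x using f by (simp add: bij_betw_def f_inv_into_f)
  define M where "M = {x, y, - x - y}"
  have "f ` ?g ` M = M" by (simp add: image_comp fg o_def)
  moreover have "ag23_line M" unfolding ag23_line_iff M_def using xy by blast
  moreover have "?g ` M \<subseteq> S" using inv_iso_in by blast
  ultimately have L: "fischer_line G D (?g ` M)" using lines[of "?g ` M"] by simp
  have "?g x \<noteq> ?g y" using xy fg by metis
  then have n: "cnj (?g x) (?g y) \<noteq> ?g y"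
    and LM: "?g ` M = {?g x, ?g y, cnj (?g y) (?g x)}"
    using fischer_line_through[OF L] by (auto simp: M_def)
  then show "cnj (?g x) (?g y) \<noteq> ?g y" by blast
  note l = noncommuting_line[OF inv_iso_in_class inv_iso_in_class n]
  have "cnj (?g y) (?g x) \<in> ?g ` M" using LM by blast
  then have "cnj (?g y) (?g x) = ?g (- x - y)" using l(2,3) by (auto simp: M_def)
  then show "cnj (?g x) (?g y) = ?g (- x - y)" using l(4) by simp
qed

lemma plane_chart_inv_iso: "plane_chart (inv_into S f)"
  unfolding plane_chart_def
proof (intro conjI allI impI)
  show "inv_into S f x \<in> D" for x by (rule inv_iso_in_class)
  show "cnj (inv_into S f x) (inv_into S f y) \<noteq> inv_into S f y" if "x \<noteq> y" for x y
    using inv_iso_third_point(1)[OF that] .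
  show "cnj (inv_into S f x) (inv_into S f y) = inv_into S f (- y - x)" for x y
  proof (cases "x = y")
    case True
    then show ?thesis using cnj_self[OF inv_iso_in_class] neg_double_3x3[of x] by simp
  next
    case False
    have "- x - y = - y - x" by (simp add: algebra_simps)
    then show ?thesis using inv_iso_third_point(2)[OF False] by metis
  qed
qed

end

lemma affine_plane_chart:
  assumes P: "fischer_affine_plane G D S"
  obtains g where "plane_chart g" "range g = S"
proof -
  obtain L1 L2 where "fischer_line G D L1" "fischer_line G D L2"
    and S: "S = fischer_span G D (L1 \<union> L2)" and iso: "iso_AG23 G D S"
    using P unfolding fischer_affine_plane_def by blast
  then have SD: "S \<subseteq> D"
    unfolding fischer_span_def using fischer_subspace_D fischer_line_subset by blast
  obtain f :: "'a \<Rightarrow> 3 \<times> 3" where f: "bij_betw f S UNIV"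
    and "\<And>L. L \<subseteq> S \<Longrightarrow> fischer_line G D L \<longleftrightarrow> ag23_line (f ` L)"
    using iso unfolding iso_AG23_def by blast
  then have "plane_chart (inv_into S f)" using plane_chart_inv_iso SD by blast
  moreover have "range (inv_into S f) = S" using bij_betw_inv_into[OF f] by (simp add: bij_betw_def)
  ultimately show ?thesis using that by blast
qed

text \<open>\<open>d\<close>, \<open>e\<close>, \<open>f\<close> sit at \<open>(0,0)\<close>, \<open>(1,0)\<close>, \<open>(0,1)\<close>; the six other labels are forced by
  \<open>cnj (g x) (g y) = g (- y - x)\<close>.\<close>

definition triple_chart :: "'a \<Rightarrow> 'a \<Rightarrow> 'a \<Rightarrow> 3 \<times> 3 \<Rightarrow> 'a" where
  "triple_chart d e f p = (if p = (0,0) then d else if p = (1,0) then e else if p = (0,1) then f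
     else if p = (2,0) then cnj d e else if p = (0,2) then cnj d f else if p = (2,2) then cnj e f
     else if p = (1,1) then cnj d (cnj e f) else if p = (2,1) then cnj e (cnj d f)
     else cnj f (cnj d e))"

context
  fixes d e f
  assumes d: "d \<in> D" and e: "e \<in> D" and f: "f \<in> D"
    and de: "cnj d e \<noteq> e" and ef: "cnj e f \<noteq> f" and df: "cnj d f \<noteq> f"
    and d_ef: "cnj d (cnj e f) \<noteq> cnj e f"
begin

lemma triple_cnj_relations:
  "cnj e (cnj d e) = d" "cnj f (cnj d f) = d" "cnj f (cnj e f) = e"
  "cnj d (cnj e (cnj d f)) = cnj f (cnj d e)" "cnj d (cnj f (cnj d e)) = cnj e (cnj d f)"
  "cnj e (cnj d (cnj e f)) = cnj f (cnj d e)" "cnj e (cnj f (cnj d e)) = cnj d (cnj e f)"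
  "cnj f (cnj d (cnj e f)) = cnj e (cnj d f)" "cnj f (cnj e (cnj d f)) = cnj d (cnj e f)"
proof -
  have de': "cnj d e = cnj e d" using cnj_swap[OF d e de] .
  have df': "cnj d f = cnj f d" using cnj_swap[OF d f df] .
  have ef': "cnj e f = cnj f e" using cnj_swap[OF e f ef] .
  have sde: "cnj d e \<in> D" and sdf: "cnj d f \<in> D" and sef: "cnj e f \<in> D" using d e f by (auto intro: cnj_in)
  show F3: "cnj e (cnj d e) = d" using de' cnj_cnj[OF e d] by simp
  show F6: "cnj f (cnj d f) = d" using df' cnj_cnj[OF f d] by simp
  show F7: "cnj f (cnj e f) = e" using ef' cnj_cnj[OF f e] by simp
  have "cnj (cnj e f) d \<noteq> d" using d_ef cnj_fixed_sym[OF d sef] by simp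
  then have n1: "cnj f (cnj d e) \<noteq> cnj d e" and n2: "cnj e (cnj d f) \<noteq> cnj d f"
    using cnj_fixed_cnj[OF f sde e] cnj_fixed_cnj[OF e sdf f] F3 F6 ef' by simp_all
  have sw1: "cnj f (cnj d e) = cnj (cnj d e) f" using cnj_swap[OF f sde n1] .
  have sw2: "cnj e (cnj d f) = cnj (cnj d f) e" using cnj_swap[OF e sdf n2] .
  have sw3: "cnj d (cnj e f) = cnj (cnj e f) d" using cnj_swap[OF d sef d_ef] .
  show "cnj d (cnj e (cnj d f)) = cnj f (cnj d e)"
    using cnj_distrib[OF e sdf d] cnj_cnj[OF d f] sw1 by simp
  show "cnj d (cnj f (cnj d e)) = cnj e (cnj d f)"
    using cnj_distrib[OF f sde d] cnj_cnj[OF d e] sw2 by simp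
  show "cnj e (cnj d (cnj e f)) = cnj f (cnj d e)"
    using cnj_distrib[OF d sef e] cnj_cnj[OF e f] de' sw1 by simp
  show "cnj e (cnj f (cnj d e)) = cnj d (cnj e f)"
    using cnj_distrib[OF f sde e] F3 sw3 by simp
  show "cnj f (cnj d (cnj e f)) = cnj e (cnj d f)"
    using cnj_distrib[OF d sef f] F7 df' sw2 by simp
  show "cnj f (cnj e (cnj d f)) = cnj d (cnj e f)"
    using cnj_distrib[OF e sdf f] F6 ef' sw3 by simp
qed

lemma triple_chart_generators:
  "cnj d (triple_chart d e f p) = triple_chart d e f (- p)"
  "cnj e (triple_chart d e f p) = triple_chart d e f (- p - (1,0))"
  "cnj f (triple_chart d e f p) = triple_chart d e f (- p - (0,1))"
proof -
  have sef: "cnj e f \<in> D" and sdf: "cnj d f \<in> D" and sde: "cnj d e \<in> D" using d e f by (auto intro: cnj_in)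
  note facts = cnj_self[OF d] cnj_self[OF e] cnj_self[OF f] cnj_cnj[OF d e] cnj_cnj[OF d f]
    cnj_cnj[OF d sef] cnj_cnj[OF e f] cnj_cnj[OF e sdf] cnj_cnj[OF f sde] triple_cnj_relations
    cnj_swap[OF d e de, symmetric] cnj_swap[OF d f df, symmetric] cnj_swap[OF e f ef, symmetric]
  have "\<forall>p. cnj d (triple_chart d e f p) = triple_chart d e f (- p)"
    "\<forall>p. cnj e (triple_chart d e f p) = triple_chart d e f (- p - (1,0))"
    "\<forall>p. cnj f (triple_chart d e f p) = triple_chart d e f (- p - (0,1))"
    unfolding all_3x3 by (simp_all add: triple_chart_def facts zero_prod_def)
  then show "cnj d (triple_chart d e f p) = triple_chart d e f (- p)"
    "cnj e (triple_chart d e f p) = triple_chart d e f (- p - (1,0))"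
    "cnj f (triple_chart d e f p) = triple_chart d e f (- p - (0,1))"
    by blast+
qed

lemma triple_chart_in: "triple_chart d e f p \<in> D"
  using d e f by (simp add: triple_chart_def cnj_in)

text \<open>The points whose conjugation acts on labels by \<open>p \<mapsto> - p - x\<close> include the generators and are
  closed under \<open>x, q \<mapsto> - x - q\<close>, which generates all of \<open>\<bbbF>\<^sub>3\<^sup>2\<close>.\<close>

lemma triple_chart_cnj: "cnj (triple_chart d e f x) (triple_chart d e f y) = triple_chart d e f (- y - x)"
proof -
  let ?P = "triple_chart d e f"
  define R where "R x \<longleftrightarrow> (\<forall>p. cnj (?P x) (?P p) = ?P (- p - x))" for x
  have step: "R (- x - q)" if Rq: "R q" and Rx: "R x" for q x
  proof -
    have Rq': "cnj (?P q) (?P p) = ?P (- p - q)" and Rx': "cnj (?P x) (?P p) = ?P (- p - x)" for p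
      using Rq Rx unfolding R_def by blast+
    have "cnj (?P (- x - q)) (?P p) = ?P (- p - (- x - q))" for p
    proof -
      have "?P (- x - q) = cnj (?P q) (?P x)" by (simp only: Rq')
      then have "cnj (?P (- x - q)) (?P p) = cnj (?P q) (cnj (?P x) (cnj (?P q) (?P p)))"
        by (simp add: cnj_by_cnj triple_chart_in)
      also have "\<dots> = ?P (- (- (- p - q) - x) - q)" by (simp only: Rq' Rx')
      also have "- (- (- p - q) - x) - q = - p - (- x - q)"
        using triple_3x3[of q] by (simp add: algebra_simps)
      finally show ?thesis .
    qed
    then show ?thesis unfolding R_def by blast
  qed
  have "R (0,0)" "R (1,0)" "R (0,1)"
    using triple_chart_generators unfolding R_def by (simp_all add: triple_chart_def)
  moreover from this have "R (2,0)" "R (0,2)" "R (2,2)"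
    using step[of "(0,0)" "(1,0)"] step[of "(0,0)" "(0,1)"] step[of "(1,0)" "(0,1)"] by simp_all
  moreover from calculation have "R (1,1)" "R (2,1)" "R (1,2)"
    using step[of "(0,0)" "(2,2)"] step[of "(1,0)" "(0,2)"] step[of "(0,1)" "(2,0)"] by simp_all
  ultimately have "\<forall>x. R x" unfolding all_3x3 by blast
  then show ?thesis unfolding R_def by blast
qed

lemma triple_chart_noncommuting:
  assumes "x \<noteq> y"
  shows "cnj (triple_chart d e f x) (triple_chart d e f y) \<noteq> triple_chart d e f y"
proof -
  let ?P = "triple_chart d e f"
  define N where "N x y \<longleftrightarrow> cnj (?P x) (?P y) \<noteq> ?P y" for x y
  have reflect: "N (- x - q) (- y - q)" if "N x y" for x y q
    using that cnj_fixed_cnj[of "?P x" "?P y" "?P q"] triple_chart_in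
    unfolding N_def by (simp add: triple_chart_cnj)
  have translate: "N (x + q) (y + q)" if "N x y" for x y q
    using reflect[OF reflect[OF that, of q], of 0] by (simp add: algebra_simps)
  have negate: "N (- x) (- y)" if "N x y" for x y
    using reflect[OF that, of 0] by simp
  have "N (0,0) (1,0)" "N (0,0) (0,1)" "N (0,0) (2,2)" "N (1,0) (0,1)"
    using de df d_ef ef unfolding N_def by (simp_all add: triple_chart_def)
  moreover from this have "N (0,0) (2,1)" using translate[of "(1,0)" "(0,1)" "(2,0)"] by simp
  moreover from calculation have "N (0,0) (2,0)" "N (0,0) (0,2)" "N (0,0) (1,1)" "N (0,0) (1,2)"
    using negate[of "(0,0)"] by fastforce+
  ultimately have "\<forall>v. v \<noteq> (0,0) \<longrightarrow> N (0,0) v" unfolding all_3x3 by simp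
  moreover have "y - x \<noteq> (0,0)" using assms by (simp flip: zero_prod_def)
  ultimately have "N ((0,0) + x) ((y - x) + x)" using translate by blast
  then show ?thesis unfolding N_def by (simp flip: zero_prod_def)
qed

lemma plane_chart_triple_chart: "plane_chart (triple_chart d e f)"
  unfolding plane_chart_def using triple_chart_in triple_chart_cnj triple_chart_noncommuting by blast

end

lemma jacobiator_basis_vanishing:
  assumes planes: "\<And>S. fischer_affine_plane G D S \<Longrightarrow> vanishing G D S"
    and d: "d \<in> D" and e: "e \<in> D" and f: "f \<in> D"
  shows "vanishing G D (jacobiator {d} {e} {f})"
proof (cases "cnj d e \<noteq> e \<and> cnj e f \<noteq> f \<and> cnj d f \<noteq> f \<and> cnj d (cnj e f) \<noteq> cnj e f")
  case True
  then have g: "plane_chart (triple_chart d e f)" using plane_chart_triple_chart d e f by blast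
  have "jacobiator {d} {e} {f} = range (triple_chart d e f)"
    using jacobiator_chart[OF g] by (simp add: triple_chart_def)
  then show ?thesis using planes chart_affine_plane[OF g] by simp
next
  case False
  then show ?thesis using jacobiator_degenerate[OF d e f] vanishing_empty by simp
qed

lemma affine_plane_vanishing_if_Lie:
  assumes Lie: "quotient_is_Lie G D" and S: "fischer_affine_plane G D S"
  shows "vanishing G D S"
proof -
  obtain g where g: "plane_chart g" and "range g = S" using affine_plane_chart[OF S] .
  moreover have "jacobiator {g (0,0)} {g (1,0)} {g (0,1)} \<in> algV G D"
    using Lie chart_in[OF g] unfolding quotient_is_Lie_def jacobiator_def by simp
  ultimately show ?thesis using jacobiator_chart[OF g] by (simp add: algV_def)
qed

lemma Lie_if_affine_planes_vanishing:
  assumes "\<And>S. fischer_affine_plane G D S \<Longrightarrow> vanishing G D S"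
  shows "quotient_is_Lie G D"
proof -
  have "algA_mult G P Q \<in> algV G D \<and> algA_mult G Q P \<in> algV G D"
    if P: "P \<in> algA D" and Q: "Q \<in> algV G D" for P Q
  proof -
    have Q_van: "vanishing G D Q" and Q_in: "Q \<in> algA D"
      using Q by (simp_all add: algV_def vanishing_def)
    have "vanishing G D (algA_mult G P Q)" by (rule algA_mult_vanishing[OF P Q_van])
    moreover have "algA_mult G Q P = algA_mult G P Q" by (rule algA_mult_comm[OF Q_in P])
    ultimately show ?thesis by (simp add: algV_def)
  qed
  moreover have "algA_mult G P P \<in> algV G D" if "P \<in> algA D" for P
    using algA_mult_self[OF that] vanishing_empty by (simp add: algV_def)
  moreover have "jacobiator P Q R \<in> algV G D" if "P \<in> algA D" "Q \<in> algA D" "R \<in> algA D" for P Q R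
    using jacobiator_vanishing[OF that jacobiator_basis_vanishing[OF assms]] by (simp add: algV_def)
  ultimately show ?thesis unfolding quotient_is_Lie_def jacobiator_def by blast
qed

end

section \<open>Conjugacy classes of involutions\<close>

lemma (in group) involutions_braid:
  assumes a: "a \<in> carrier G" and b: "b \<in> carrier G" and aa: "a \<otimes> a = \<one>" and bb: "b \<otimes> b = \<one>"
    and ord: "ord (a \<otimes> b) \<in> {1, 2, 3}" and n: "a \<otimes> b \<noteq> b \<otimes> a"
  shows "a \<otimes> b \<otimes> a = b \<otimes> a \<otimes> b"
proof -
  have ab: "a \<otimes> b \<in> carrier G" using a b by simp
  have inv_a: "inv a = a" and inv_b: "inv b = b" using inv_equality a b aa bb by auto
  have pow: "(a \<otimes> b) [^] ord (a \<otimes> b) = \<one>" using pow_ord_eq_1[OF ab] .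
  have "ord (a \<otimes> b) \<noteq> 1"
  proof
    assume "ord (a \<otimes> b) = 1"
    then have "a \<otimes> b = a \<otimes> a" using pow ab aa by simp
    then show False using a b n l_cancel by blast
  qed
  moreover have "ord (a \<otimes> b) \<noteq> 2"
  proof
    assume "ord (a \<otimes> b) = 2"
    then have "(a \<otimes> b) \<otimes> (a \<otimes> b) = \<one>" using pow ab by (simp add: numeral_2_eq_2)
    then have "inv (a \<otimes> b) = a \<otimes> b" using ab by (simp add: inv_equality)
    then show False using a b inv_a inv_b n by (simp add: inv_mult_group)
  qed
  ultimately have "ord (a \<otimes> b) = 3" using ord by blast
  then have "(a \<otimes> b \<otimes> a) \<otimes> (b \<otimes> a \<otimes> b) = \<one>" using pow a b by (simp add: numeral_3_eq_3 m_assoc)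
  then have "inv (b \<otimes> a \<otimes> b) = a \<otimes> b \<otimes> a" using a b by (simp add: inv_equality)
  moreover have "inv (b \<otimes> a \<otimes> b) = b \<otimes> a \<otimes> b" using a b inv_a inv_b by (simp add: inv_mult_group m_assoc)
  ultimately show ?thesis by simp
qed

lemma (in group) three_transpositions_conj_class:
  assumes d0: "d0 \<in> carrier G"
    and D: "D = {g \<otimes> d0 \<otimes> inv g | g. g \<in> carrier G}"
    and invol: "\<And>d. d \<in> D \<Longrightarrow> d \<otimes> d = \<one>"
    and ord: "\<And>d e. d \<in> D \<Longrightarrow> e \<in> D \<Longrightarrow> ord (d \<otimes> e) \<in> {1, 2, 3}"
  shows "three_transpositions G D"
proof
  show DG: "D \<subseteq> carrier G" unfolding D using d0 by auto
  show "d \<otimes> d = \<one>" if "d \<in> D" for d using invol that .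
  show "a \<otimes> b \<otimes> a = b \<otimes> a \<otimes> b" if "a \<in> D" "b \<in> D" "a \<otimes> b \<noteq> b \<otimes> a" for a b
    using involutions_braid that DG invol ord by blast
  show "a \<otimes> b \<otimes> a \<in> D" if a: "a \<in> D" and b: "b \<in> D" for a b
  proof -
    obtain k where k: "k \<in> carrier G" "b = k \<otimes> d0 \<otimes> inv k" using b unfolding D by blast
    have "inv a = a" using inv_equality[of a a] invol[OF a] a DG by auto
    then have "a \<otimes> b \<otimes> a = (a \<otimes> k) \<otimes> d0 \<otimes> inv (a \<otimes> k)"
      using k a DG d0 by (simp add: inv_mult_group m_assoc subset_iff)
    moreover have "a \<otimes> k \<in> carrier G" using a DG k by auto
    ultimately show ?thesis unfolding D by blast
  qed
qed

theorem corollary2p10: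
  fixes G :: "('a, 'b) monoid_scheme" and D :: "'a set"
  assumes "group G"
    and "d0 \<in> carrier G"
    and "D = {g \<otimes>\<^bsub>G\<^esub> d0 \<otimes>\<^bsub>G\<^esub> inv\<^bsub>G\<^esub> g | g. g \<in> carrier G}"
    and "\<forall>d\<in>D. d \<noteq> \<one>\<^bsub>G\<^esub> \<and> d \<otimes>\<^bsub>G\<^esub> d = \<one>\<^bsub>G\<^esub>"
    and "generate G D = carrier G"
    and "\<forall>d\<in>D. \<forall>e\<in>D. group.ord G (d \<otimes>\<^bsub>G\<^esub> e) \<in> {1, 2, 3}"
  shows "quotient_is_Lie G D \<longleftrightarrow>
         (\<forall>S. fischer_affine_plane G D S \<longrightarrow> vanishing G D S)"
proof -
  interpret three_transpositions G D
    using group.three_transpositions_conj_class[OF assms(1,2,3)] assms(4,6) by blast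
  show ?thesis using affine_plane_vanishing_if_Lie Lie_if_affine_planes_vanishing by blast
qed

end
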